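(* Let $d'$ be a positive integer and $\varepsilon,\gamma\in(0,1)$ with $d'\ge\left(\frac12\left\lceil\frac{1}{2\varepsilon+\gamma}\right\rceil\right)^{1/\gamma}$, and let $p$ be the smallest prime larger than ${d'}^{2\varepsilon+\gamma}$. Then for every vector $\mathbf{x}'\in\mathbb{R}^{d'}$ with at most ${d'}^{\varepsilon}$ non-zero entries there exists $h_\star\in\mathcal H_{d',2\varepsilon+\gamma}$ such that $h_\star(i)\ne h_\star(j)$ for all $i\ne j$ with $x'_i\ne0\ne x'_j$.
   Context: For $d'$ and $\varepsilon'>0$: let $p$ be the smallest prime larger than ${d'}^{\varepsilon'}$ and $n=\lceil 1/\varepsilon'\rceil$; for $i\in[d']$ let $\mathrm{base}_p(i)\in\{0,\dots,p-1\}^n$ be the $n$-digit base-$p$ representation of $i$, with $j$-th digit $\mathrm{base}_p(i)_j$. For $a\in[p]$ define $h_a:[d']\to[p]$ by $h_a(i)=a+\sum_{j=1}^n a^j\,\mathrm{base}_p(i)_j \bmod p$, and $\mathcal H_{d',\varepsilon'}=\{h_a: a\in[p]\}$. Here $\varepsilon'=2\varepsilon+\gamma$. *)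

theory Defs
  imports "HOL-Computational_Algebra.Primes" Complex_Main
begin

definition smallest_prime_gt :: "real \<Rightarrow> nat" where
  "smallest_prime_gt t = (LEAST p. prime p \<and> real p > t)"

definition hash_len :: "real \<Rightarrow> nat" where
  "hash_len eps' = nat \<lceil>1 / eps'\<rceil>"

text \<open>j-th base-p digit of i (j = 1 is the least significant digit).\<close>
definition base_digit :: "nat \<Rightarrow> nat \<Rightarrow> nat \<Rightarrow> nat" where
  "base_digit p i j = (i div p ^ (j - 1)) mod p"

definition hash_fun :: "nat \<Rightarrow> nat \<Rightarrow> nat \<Rightarrow> nat \<Rightarrow> nat" where
  "hash_fun p n a i = (a + (\<Sum>j=1..n. a ^ j * base_digit p i j)) mod p"

definition hash_family :: "nat \<Rightarrow> real \<Rightarrow> (nat \<Rightarrow> nat) set" where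
  "hash_family d' eps' =
     (let p = smallest_prime_gt (real d' powr eps'); n = hash_len eps'
      in {hash_fun p n a | a. a < p})"

end

theory Submission
  imports Defs "HOL-Computational_Algebra.Polynomial" "HOL-Number_Theory.Cong"
begin

text \<open>
  Write n for the hash length and p for the prime. Since n \<ge> 1/(2\<epsilon>+\<gamma>) and p > d'^(2\<epsilon>+\<gamma>),
  every index up to d' is below p^n, so distinct indices i, j have different base-p digits.
  Then h_a(i) = h_a(j) says that a is a root modulo p of the polynomial
  \<Sum>k. (base_p(i)_k - base_p(j)_k) X^k, which has degree \<le> n and a coefficient that is
  nonzero modulo p; hence at most n seeds a < p make i and j collide. With s \<le> d'^\<epsilon> support
  indices there are at most s^2/2 pairs, and the hypothesis on d' gives n \<le> 2 d'^\<gamma>, so all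
  pairs together rule out at most s^2 n/2 \<le> d'^(2\<epsilon>+\<gamma>) < p seeds: some seed is left over.
\<close>

lemma card_roots_mod_prime_le_degree:
  fixes f :: "int poly" and p :: nat
  assumes "prime p" and "\<not> [:int p:] dvd f"
  shows "card {a. a < p \<and> int p dvd poly f (int a)} \<le> degree f"
  using assms(2)
proof (induction "degree f" arbitrary: f rule: less_induct)
  case less
  show ?case
  proof (cases "\<exists>r<p. int p dvd poly f (int r)")
    case False
    then have "{a. a < p \<and> int p dvd poly f (int a)} = {}" by blast
    then show ?thesis by (metis card.empty zero_le)
  next
    case True
    then obtain r where r: "r < p" "int p dvd poly f (int r)" by blast
    define g where "g = synthetic_div f (int r)"
    have f_eq: "f = [:- int r, 1:] * g + [:poly f (int r):]"
      unfolding g_def by (rule synthetic_div_correct'[symmetric])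
    have "degree f \<noteq> 0"
    proof
      assume "degree f = 0"
      then obtain c where "f = [:c:]" by (rule degree_eq_zeroE)
      then have "f = [:poly f (int r):]" by simp
      then show False using less.prems r(2) by (metis const_poly_dvd_const_poly_iff)
    qed
    then have deg_g: "degree g < degree f" by (simp add: g_def degree_synthetic_div)
    have "\<not> [:int p:] dvd g"
    proof
      assume "[:int p:] dvd g"
      then have "[:int p:] dvd [:- int r, 1:] * g + [:poly f (int r):]"
        using r(2) by (intro dvd_add dvd_mult) simp_all
      then show False using less.prems f_eq by simp
    qed
    then have IH: "card {a. a < p \<and> int p dvd poly g (int a)} \<le> degree g"
      using less.hyps deg_g by blast
    have "{a. a < p \<and> int p dvd poly f (int a)} \<subseteq> insert r {a. a < p \<and> int p dvd poly g (int a)}"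
    proof (intro subsetI CollectI insertCI)
      fix s assume "s \<in> {a. a < p \<and> int p dvd poly f (int a)}"
        and "s \<notin> {a. a < p \<and> int p dvd poly g (int a)}"
      then have s: "s < p" "int p dvd poly f (int s)" "\<not> int p dvd poly g (int s)" by simp_all
      have "poly f (int s) = (int s - int r) * poly g (int s) + poly f (int r)"
        by (subst f_eq) (simp add: algebra_simps)
      then have "int p dvd (int s - int r) * poly g (int s)"
        using s(2) r(2) by (metis dvd_add_left_iff)
      then have "int p dvd int s - int r"
        using s by (simp add: assms(1) prime_dvd_mult_iff)
      then have "[s = r] (mod p)"
        by (simp add: cong_iff_dvd_diff flip: cong_int_iff)
      then show "s = r" using s(1) r(1) by (rule cong_less_modulus_unique_nat)
    qed
    then have "card {a. a < p \<and> int p dvd poly f (int a)}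
        \<le> card (insert r {a. a < p \<and> int p dvd poly g (int a)})"
      by (rule card_mono[rotated]) simp
    also have "\<dots> \<le> Suc (degree g)"
      using IH by (simp add: card_insert_if)
    also have "\<dots> \<le> degree f" using deg_g by simp
    finally show ?thesis .
  qed
qed

lemma mod_power_eq_if_base_digits_eq:
  assumes "\<forall>k\<in>{1..n}. base_digit p i k = base_digit p j k"
  shows "i mod p ^ n = j mod p ^ n"
  using assms
proof (induction n)
  case 0
  then show ?case by simp
next
  case (Suc n)
  have IH: "i mod p ^ n = j mod p ^ n" using Suc by auto
  have top_digit: "i div p ^ n mod p = j div p ^ n mod p"
    using Suc.prems by (auto simp: base_digit_def dest: bspec[of _ _ "Suc n"])
  have "i mod p ^ Suc n = p ^ n * (i div p ^ n mod p) + i mod p ^ n"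
    by (subst power_Suc2, rule mod_mult2_eq)
  also have "\<dots> = p ^ n * (j div p ^ n mod p) + j mod p ^ n"
    using IH top_digit by simp
  also have "\<dots> = j mod p ^ Suc n"
    by (subst power_Suc2, rule mod_mult2_eq[symmetric])
  finally show ?case .
qed

definition digit_diff_poly :: "nat \<Rightarrow> nat \<Rightarrow> nat \<Rightarrow> nat \<Rightarrow> int poly" where
  "digit_diff_poly p n i j =
     (\<Sum>k=1..n. monom (int (base_digit p i k) - int (base_digit p j k)) k)"

lemma degree_digit_diff_poly_le: "degree (digit_diff_poly p n i j) \<le> n"
  unfolding digit_diff_poly_def
  by (rule degree_sum_le) (auto intro: order.trans[OF degree_monom_le])

lemma coeff_digit_diff_poly:
  "k \<in> {1..n} \<Longrightarrow>
     coeff (digit_diff_poly p n i j) k = int (base_digit p i k) - int (base_digit p j k)"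
  unfolding digit_diff_poly_def by (simp add: coeff_sum coeff_monom)

lemma poly_digit_diff_poly:
  "poly (digit_diff_poly p n i j) x =
     (\<Sum>k=1..n. (int (base_digit p i k) - int (base_digit p j k)) * x ^ k)"
  unfolding digit_diff_poly_def by (simp add: poly_sum poly_monom)

lemma not_const_dvd_digit_diff_poly:
  assumes "0 < p" "i < p ^ n" "j < p ^ n" "i \<noteq> j"
  shows "\<not> [:int p:] dvd digit_diff_poly p n i j"
proof -
  have "i mod p ^ n \<noteq> j mod p ^ n" using assms(2-4) by simp
  then obtain k where k: "k \<in> {1..n}" "base_digit p i k \<noteq> base_digit p j k"
    using mod_power_eq_if_base_digits_eq by blast
  define c where "c = int (base_digit p i k) - int (base_digit p j k)"
  have "base_digit p i k < p" "base_digit p j k < p"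
    using assms(1) by (simp_all add: base_digit_def)
  then have "\<bar>c\<bar> < int p" by (simp add: c_def abs_less_iff)
  moreover have "c \<noteq> 0" using k(2) by (simp add: c_def)
  ultimately have "\<not> int p dvd c"
    using dvd_imp_le_int[of c "int p"] by linarith
  moreover have "coeff (digit_diff_poly p n i j) k = c"
    using k(1) by (simp add: coeff_digit_diff_poly c_def)
  ultimately show ?thesis by (metis const_poly_dvd_iff)
qed

lemma hash_fun_eq_imp_dvd_poly_digit_diff_poly:
  assumes "hash_fun p n a i = hash_fun p n a j"
  shows "int p dvd poly (digit_diff_poly p n i j) (int a)"
proof -
  have "[a + (\<Sum>k=1..n. a ^ k * base_digit p i k) = a + (\<Sum>k=1..n. a ^ k * base_digit p j k)] (mod p)"
    using assms by (simp add: hash_fun_def cong_def)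
  then have "int p dvd int (a + (\<Sum>k=1..n. a ^ k * base_digit p i k))
                     - int (a + (\<Sum>k=1..n. a ^ k * base_digit p j k))"
    by (simp add: cong_iff_dvd_diff flip: cong_int_iff)
  also have "\<dots> = poly (digit_diff_poly p n i j) (int a)"
    by (simp add: poly_digit_diff_poly sum_subtractf algebra_simps)
  finally show ?thesis .
qed

lemma card_hash_collisions_le:
  assumes "prime p" "i < p ^ n" "j < p ^ n" "i \<noteq> j"
  shows "card {a. a < p \<and> hash_fun p n a i = hash_fun p n a j} \<le> n"
proof -
  have "card {a. a < p \<and> hash_fun p n a i = hash_fun p n a j}
          \<le> card {a. a < p \<and> int p dvd poly (digit_diff_poly p n i j) (int a)}"
    by (rule card_mono) (auto intro: hash_fun_eq_imp_dvd_poly_digit_diff_poly)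
  also have "\<dots> \<le> degree (digit_diff_poly p n i j)"
    using assms by (intro card_roots_mod_prime_le_degree not_const_dvd_digit_diff_poly prime_gt_0_nat)
  also have "\<dots> \<le> n" by (rule degree_digit_diff_poly_le)
  finally show ?thesis .
qed

lemma card_less_pairs_le:
  fixes S :: "'a::linorder set"
  assumes "finite S"
  shows "2 * card {(i, j)\<in>S \<times> S. i < j} \<le> card S * card S"
proof -
  let ?P = "{(i, j)\<in>S \<times> S. i < j}" and ?Q = "{(i, j)\<in>S \<times> S. j < i}"
  have "?Q = prod.swap ` ?P" by auto
  then have "card ?Q = card ?P" by (simp add: card_image)
  moreover have "card (?P \<union> ?Q) = card ?P + card ?Q"
    using assms by (intro card_Un_disjoint) (auto intro: finite_subset[of _ "S \<times> S"])
  moreover have "card (?P \<union> ?Q) \<le> card (S \<times> S)"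
    using assms by (intro card_mono) auto
  ultimately show ?thesis by (simp add: card_cartesian_product)
qed

lemma exists_hash_fun_inj_on:
  assumes "prime p" "\<forall>i\<in>S. i < p ^ n" "card S * card S * n < 2 * p"
  shows "\<exists>a<p. inj_on (hash_fun p n a) S"
proof -
  have fin: "finite S" using assms(2) finite_nat_set_iff_bounded by blast
  define P where "P = {(i, j)\<in>S \<times> S. i < j}"
  define collisions where
    "collisions = (\<lambda>(i, j). {a. a < p \<and> hash_fun p n a i = hash_fun p n a j})"
  define bad where "bad = (\<Union>ij\<in>P. collisions ij)"
  have "card bad \<le> (\<Sum>ij\<in>P. card (collisions ij))"
    unfolding bad_def
    by (rule card_UN_le) (use fin in \<open>auto simp: P_def intro: finite_subset[of _ "S \<times> S"]\<close>)
  also have "\<dots> \<le> card P * n"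
  proof -
    have "card (collisions ij) \<le> n" if "ij \<in> P" for ij
    proof -
      obtain i j where "ij = (i, j)" "i \<in> S" "j \<in> S" "i < j"
        using \<open>ij \<in> P\<close> by (auto simp: P_def)
      then show ?thesis
        using card_hash_collisions_le[OF assms(1)] assms(2) by (simp add: collisions_def)
    qed
    then show ?thesis using sum_bounded_above[of P "\<lambda>ij. card (collisions ij)" n] by simp
  qed
  also have "\<dots> < p"
  proof -
    have "2 * (card P * n) \<le> card S * card S * n"
      using card_less_pairs_le[OF fin] unfolding P_def mult.assoc[symmetric] by (rule mult_le_mono1)
    then show ?thesis using assms(3) by linarith
  qed
  finally have "card bad < card {..<p}" by simp
  then have "bad \<noteq> {..<p}" by auto
  moreover have "bad \<subseteq> {..<p}" by (auto simp: bad_def collisions_def)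
  ultimately obtain a where a: "a < p" "a \<notin> bad" by blast
  have "hash_fun p n a i \<noteq> hash_fun p n a j" if "i \<in> S" "j \<in> S" "i < j" for i j
    using a that by (auto simp: bad_def P_def collisions_def)
  then have "inj_on (hash_fun p n a) S"
    by (intro inj_onI) (metis linorder_neqE_nat)
  with a(1) show ?thesis by blast
qed

lemma smallest_prime_gt:
  shows smallest_prime_gt_prime: "prime (smallest_prime_gt t)"
    and smallest_prime_gt_greater: "t < real (smallest_prime_gt t)"
proof -
  obtain q :: nat where "prime q" "nat \<lceil>t\<rceil> < q" using bigger_prime by blast
  then have "prime q \<and> t < real q" by linarith
  then have "prime (smallest_prime_gt t) \<and> t < real (smallest_prime_gt t)"
    unfolding smallest_prime_gt_def by (rule LeastI)
  then show "prime (smallest_prime_gt t)" "t < real (smallest_prime_gt t)" by simp_all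
qed

lemma less_power_hash_len:
  fixes d q :: real
  assumes "1 \<le> d" "0 < e" "d powr e < q"
  shows "d < q ^ hash_len e"
proof -
  define n where "n = hash_len e"
  have "1 / e \<le> real n" using assms(2) by (simp add: n_def hash_len_def)
  then have "1 \<le> e * real n" using assms(2) by (simp add: field_simps)
  then have "0 < n" by (cases n) auto
  have "d = d powr 1" using assms(1) by simp
  also have "\<dots> \<le> d powr (e * real n)"
    using assms(1) \<open>1 \<le> e * real n\<close> by (rule powr_mono[rotated])
  also have "\<dots> = (d powr e) ^ n"
    using assms(1) by (simp add: powr_powr[symmetric] powr_realpow)
  also have "\<dots> < q ^ n"
    using assms \<open>0 < n\<close> by (intro power_strict_mono) auto
  finally show ?thesis unfolding n_def .
qed

lemma hash_len_le_powr:
  fixes d :: real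
  assumes "0 < e" "0 < \<gamma>" "((1/2) * real_of_int \<lceil>1 / e\<rceil>) powr (1/\<gamma>) \<le> d"
  shows "real (hash_len e) \<le> 2 * d powr \<gamma>"
proof -
  define n where "n = hash_len e"
  have n_eq: "real n = real_of_int \<lceil>1 / e\<rceil>" using assms(1) by (simp add: n_def hash_len_def)
  then have "0 < real n" using assms(1) by simp
  have "real n / 2 = ((real n / 2) powr (1/\<gamma>)) powr \<gamma>"
    using assms(2) \<open>0 < real n\<close> by (simp add: powr_powr)
  also have "\<dots> \<le> d powr \<gamma>"
    using assms(2,3) n_eq by (intro powr_mono2) auto
  finally show ?thesis unfolding n_def by simp
qed

lemma hash_fun_mem_hash_family:
  assumes "a < smallest_prime_gt (real d powr e)"
  shows "hash_fun (smallest_prime_gt (real d powr e)) (hash_len e) a \<in> hash_family d e"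
  using assms by (auto simp: hash_family_def Let_def)

lemma square_times_hash_len_less:
  fixes s d q :: nat
  assumes "0 < \<gamma>" "0 < 2*\<epsilon> + \<gamma>"
    and "((1/2) * real_of_int \<lceil>1 / (2*\<epsilon> + \<gamma>)\<rceil>) powr (1/\<gamma>) \<le> real d"
    and "real s \<le> real d powr \<epsilon>" and "real d powr (2*\<epsilon> + \<gamma>) < real q"
  shows "s * s * hash_len (2*\<epsilon> + \<gamma>) < 2 * q"
proof -
  have "real s * real s * real (hash_len (2*\<epsilon> + \<gamma>))
      \<le> real d powr \<epsilon> * real d powr \<epsilon> * (2 * real d powr \<gamma>)"
    using assms(4) hash_len_le_powr[OF assms(2,1,3)] by (intro mult_mono) auto
  also have "\<dots> = 2 * real d powr (2*\<epsilon> + \<gamma>)"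
    by (simp add: powr_add[symmetric] mult_ac add_ac)
  also have "\<dots> < 2 * real q" using assms(5) by simp
  finally have "real (s * s * hash_len (2*\<epsilon> + \<gamma>)) < real (2 * q)" by simp
  then show ?thesis by (simp only: of_nat_less_iff)
qed

theorem lemmaF9:
  fixes d' :: nat and \<epsilon> \<gamma> :: real and x :: "nat \<Rightarrow> real"
  assumes "d' > 0"
    and "0 < \<epsilon>" and "\<epsilon> < 1" and "0 < \<gamma>" and "\<gamma> < 1"
    and "real d' \<ge> ((1/2) * real_of_int \<lceil>1 / (2*\<epsilon> + \<gamma>)\<rceil>) powr (1/\<gamma>)"
    and "real (card {i\<in>{1..d'}. x i \<noteq> 0}) \<le> real d' powr \<epsilon>"
  shows "\<exists>h\<in>hash_family d' (2*\<epsilon> + \<gamma>).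
           \<forall>i\<in>{1..d'}. \<forall>j\<in>{1..d'}. i \<noteq> j \<and> x i \<noteq> 0 \<and> x j \<noteq> 0 \<longrightarrow> h i \<noteq> h j"
proof -
  define e where "e = 2*\<epsilon> + \<gamma>"
  define p where "p = smallest_prime_gt (real d' powr e)"
  define n where "n = hash_len e"
  define S where "S = {i\<in>{1..d'}. x i \<noteq> 0}"
  have "0 < e" using assms(2,4) by (simp add: e_def)
  have "prime p" unfolding p_def by (rule smallest_prime_gt_prime)
  have p_gt: "real d' powr e < real p" unfolding p_def by (rule smallest_prime_gt_greater)
  have "real d' < real p ^ n"
    using assms(1) \<open>0 < e\<close> p_gt unfolding n_def by (intro less_power_hash_len) auto
  then have "\<forall>i\<in>S. i < p ^ n" by (auto simp: S_def simp flip: of_nat_power)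
  moreover have "card S * card S * n < 2 * p"
    using assms(4,6,7) \<open>0 < e\<close> p_gt unfolding S_def n_def e_def
    by (intro square_times_hash_len_less) auto
  ultimately obtain a where "a < p" and inj: "inj_on (hash_fun p n a) S"
    using exists_hash_fun_inj_on[OF \<open>prime p\<close>] by blast
  have "hash_fun p n a \<in> hash_family d' (2*\<epsilon> + \<gamma>)"
    using \<open>a < p\<close> unfolding p_def n_def e_def by (rule hash_fun_mem_hash_family)
  moreover have "hash_fun p n a i \<noteq> hash_fun p n a j"
    if "i \<in> {1..d'}" "j \<in> {1..d'}" "i \<noteq> j \<and> x i \<noteq> 0 \<and> x j \<noteq> 0" for i j
    using that inj_onD[OF inj, of i j] by (auto simp: S_def)
  ultimately show ?thesis by blast
qed
end
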